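(* For $w>0$, the graphic generating function of directed acyclic graphs satisfies, as an identity of formal power series in $z$, \[u\,\partial_u \mathrm{DAG}(z,w,u)=u z\,\mathrm{DAG}\!\left(\frac{z}{1+w},w,u\right)\mathrm{DAG}\!\left(z,w,\frac{w}{1+w}\right).\]
   Context: For a labelled DAG $G$ (directed acyclic graph on vertex set $\{1,\dots,n\}$, $n\ge0$), $v(G)$, $e(G)$, $s(G)$ denote its numbers of vertices, edges, and sources (vertices of in-degree $0$). $\mathrm{DAG}(z,w,u)=\sum_G \frac{z^{v(G)}w^{e(G)}u^{s(G)}}{(1+w)^{\binom{v(G)}{2}}v(G)!}$, the sum over all labelled DAGs. (It is known that $\mathrm{DAG}(z,w,u)=\mathrm{Set}((u-1)z,w)/\mathrm{Set}(-z,w)$ with $\mathrm{Set}(z,w)=\sum_{n\ge0}\frac{z^n}{(1+w)^{\binom n2}n!}$.) *)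

theory Defs
  imports "HOL-Analysis.Analysis" "HOL-Computational_Algebra.Formal_Power_Series"
begin

definition dags :: "nat \<Rightarrow> (nat \<times> nat) set set" where
  "dags n = {E. E \<subseteq> {1..n} \<times> {1..n} \<and> acyclic E}"

definition sources :: "nat \<Rightarrow> (nat \<times> nat) set \<Rightarrow> nat set" where
  "sources n E = {v \<in> {1..n}. \<forall>x. (x, v) \<notin> E}"

definition dag_coeff :: "nat \<Rightarrow> real \<Rightarrow> real \<Rightarrow> real" where
  "dag_coeff n w u =
     (\<Sum>E\<in>dags n. w ^ card E * u ^ card (sources n E))
       / ((1 + w) ^ (n choose 2) * fact n)"

definition DAG :: "real \<Rightarrow> real \<Rightarrow> real fps" where
  "DAG w u = Abs_fps (\<lambda>n. dag_coeff n w u)"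

definition u_du_DAG :: "real \<Rightarrow> real \<Rightarrow> real fps" where
  "u_du_DAG w u = Abs_fps (\<lambda>n. u * deriv (\<lambda>v. dag_coeff n w v) u)"

end

(*
  Writing u^s = (1 + (u - 1))^s, a DAG weighted by u^(number of sources) becomes a DAG
  together with a marked set S of sources, weighted by (u - 1)^|S|. A DAG in which all
  of S are sources is a DAG on the remaining vertices plus an arbitrary set of edges from
  S to them, which gives DAG(z,w,u) = Set((u-1)z,w) DAG(z,w,1). At u = 0 the left side is 1,
  since every nonempty DAG has a source, so Set(-z,w) inverts DAG(z,w,1). Differentiating
  Set((u-1)z,w) in u gives z Set((u-1)z/(1+w),w); rewriting this via the factorization at u
  (with z replaced by z/(1+w)) and at u = w/(1+w) yields the identity.
*)
theory Submission
  imports Defs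
begin

definition dags_on :: "'a set \<Rightarrow> ('a \<times> 'a) set set" where
  "dags_on V = {E. E \<subseteq> V \<times> V \<and> acyclic E}"

definition sources_on :: "'a set \<Rightarrow> ('a \<times> 'a) set \<Rightarrow> 'a set" where
  "sources_on V E = {v \<in> V. \<forall>x. (x, v) \<notin> E}"

definition dags_weight :: "real \<Rightarrow> 'a set \<Rightarrow> real" where
  "dags_weight w V = (\<Sum>E\<in>dags_on V. w ^ card E)"

lemma dags_eq_dags_on: "dags n = dags_on {1..n}"
  unfolding dags_def dags_on_def ..

lemma sources_eq_sources_on: "sources n E = sources_on {1..n} E"
  unfolding sources_def sources_on_def ..

lemma finite_dags_on: "finite V \<Longrightarrow> finite (dags_on V)"
  unfolding dags_on_def by (rule finite_subset[of _ "Pow (V \<times> V)"]) auto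

lemma finite_dags_on_member: "finite V \<Longrightarrow> E \<in> dags_on V \<Longrightarrow> finite E"
  unfolding dags_on_def by (auto intro: finite_subset)

lemma acyclic_map_prod_image:
  assumes "acyclic E" "finite E" "inj_on f (Field E)"
  shows "acyclic (map_prod f f ` E)"
proof -
  have "wf E" using assms(2,1) by (rule finite_acyclic_wf)
  then have "wf (map_prod f f ` E)"
    by (rule wf_map_prod_image_Dom_Ran) (use assms(3) in \<open>auto simp: Field_def dest: inj_onD\<close>)
  then show ?thesis by (rule wf_acyclic)
qed

lemma map_prod_image_in_dags_on:
  assumes "E \<in> dags_on V" "finite V" "inj_on f V" "f ` V \<subseteq> W"
  shows "map_prod f f ` E \<in> dags_on W"
proof -
  have EV: "E \<subseteq> V \<times> V" and "acyclic E" using assms(1) unfolding dags_on_def by auto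
  moreover have "inj_on f (Field E)"
    using EV by (intro inj_on_subset[OF assms(3)]) (auto simp: Field_def)
  ultimately have "acyclic (map_prod f f ` E)"
    using acyclic_map_prod_image finite_dags_on_member[OF assms(2,1)] by blast
  with EV assms(4) show ?thesis unfolding dags_on_def by auto
qed

lemma dags_weight_bij_betw:
  assumes "bij_betw f V W" "finite V"
  shows "dags_weight w V = dags_weight w W"
  unfolding dags_weight_def
proof (rule sum.reindex_bij_witness[where j = "image (map_prod f f)"
      and i = "image (map_prod (inv_into V f) (inv_into V f))"])
  have f: "inj_on f V" "f ` V = W" and g: "inj_on (inv_into V f) W" "inv_into V f ` W = V"
    using assms(1) bij_betw_inv_into[OF assms(1)] by (auto simp: bij_betw_def)
  have "finite W" using assms by (metis bij_betw_finite)
  show "map_prod f f ` E \<in> dags_on W" if "E \<in> dags_on V" for E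
    using that assms(2) f by (intro map_prod_image_in_dags_on) auto
  show "map_prod (inv_into V f) (inv_into V f) ` E \<in> dags_on V" if "E \<in> dags_on W" for E
    using that \<open>finite W\<close> g by (intro map_prod_image_in_dags_on) auto
  show "map_prod (inv_into V f) (inv_into V f) ` map_prod f f ` E = E" if "E \<in> dags_on V" for E
  proof -
    have "E \<subseteq> V \<times> V" using that unfolding dags_on_def by simp
    then show ?thesis using f(1) by (force simp: image_image)
  qed
  show "map_prod f f ` map_prod (inv_into V f) (inv_into V f) ` E = E" if "E \<in> dags_on W" for E
  proof -
    have "E \<subseteq> W \<times> W" using that unfolding dags_on_def by simp
    then show ?thesis using f(2) by (force simp: image_image f_inv_into_f)
  qed
  show "w ^ card (map_prod f f ` E) = w ^ card E" if "E \<in> dags_on V" for E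
  proof -
    have "inj_on (map_prod f f) E"
      using that map_prod_inj_on[OF f(1) f(1)] unfolding dags_on_def by (auto intro: inj_on_subset)
    then show ?thesis by (simp add: card_image)
  qed
qed

lemma dags_weight_eq_atLeastAtMost:
  "finite V \<Longrightarrow> dags_weight w V = dags_weight w {1..card V}"
  using finite_same_card_bij[of V "{1..card V}"] dags_weight_bij_betw by fastforce

lemma trancl_Un_edges_into:
  assumes "(x, y) \<in> (E \<union> F)\<^sup>+" "E \<subseteq> T \<times> T" "F \<subseteq> S \<times> T" "S \<inter> T = {}"
  shows "(x, y) \<in> E\<^sup>+ \<or> (x \<in> S \<and> y \<in> T)"
  using assms(1)
proof (induction rule: trancl_induct)
  case (base y)
  then show ?case using assms(3) by auto
next
  case (step y z)
  have "E\<^sup>+ \<subseteq> T \<times> T" using assms(2) by (rule trancl_subset_Sigma)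
  with step assms(2-4) show ?case by (auto intro: trancl_into_trancl)
qed

lemma acyclic_Un_edges_into:
  assumes "acyclic E" "E \<subseteq> T \<times> T" "F \<subseteq> S \<times> T" "S \<inter> T = {}"
  shows "acyclic (E \<union> F)"
  using assms trancl_Un_edges_into[OF _ assms(2-4)] unfolding acyclic_def by blast

lemma dags_on_sources_superset_eq_image:
  assumes "S \<inter> T = {}"
  shows "{E \<in> dags_on (S \<union> T). S \<subseteq> sources_on (S \<union> T) E}
           = (\<lambda>(E, F). E \<union> F) ` (dags_on T \<times> Pow (S \<times> T))"
proof
  show "{E \<in> dags_on (S \<union> T). S \<subseteq> sources_on (S \<union> T) E} \<subseteq> (\<lambda>(E, F). E \<union> F) ` (dags_on T \<times> Pow (S \<times> T))"
  proof
    fix E assume E: "E \<in> {E \<in> dags_on (S \<union> T). S \<subseteq> sources_on (S \<union> T) E}"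
    then have "E \<subseteq> (S \<union> T) \<times> T" unfolding dags_on_def sources_on_def by auto
    then have "E = (E \<inter> (T \<times> T)) \<union> (E \<inter> (S \<times> T))" by auto
    moreover have "(E \<inter> (T \<times> T), E \<inter> (S \<times> T)) \<in> dags_on T \<times> Pow (S \<times> T)"
      using E unfolding dags_on_def by (auto intro: acyclic_subset)
    ultimately show "E \<in> (\<lambda>(E, F). E \<union> F) ` (dags_on T \<times> Pow (S \<times> T))"
      by (metis (no_types, lifting) case_prod_conv rev_image_eqI)
  qed
  show "(\<lambda>(E, F). E \<union> F) ` (dags_on T \<times> Pow (S \<times> T)) \<subseteq> {E \<in> dags_on (S \<union> T). S \<subseteq> sources_on (S \<union> T) E}"
  proof (rule image_subsetI)
    fix p assume "p \<in> dags_on T \<times> Pow (S \<times> T)"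
    then obtain E F where p: "p = (E, F)" and E: "E \<in> dags_on T" and F: "F \<subseteq> S \<times> T" by auto
    then have "acyclic (E \<union> F)"
      using assms acyclic_Un_edges_into[of E T F S] unfolding dags_on_def by blast
    moreover have "E \<union> F \<subseteq> (S \<union> T) \<times> T" using E F unfolding dags_on_def by blast
    ultimately show "(\<lambda>(E, F). E \<union> F) p \<in> {E \<in> dags_on (S \<union> T). S \<subseteq> sources_on (S \<union> T) E}"
      using assms unfolding p dags_on_def sources_on_def by auto
  qed
qed

lemma sum_power_card_Pow:
  "finite A \<Longrightarrow> (\<Sum>B\<in>Pow A. (w :: 'a :: comm_semiring_1) ^ card B) = (1 + w) ^ card A"
  using prod_add[of A "\<lambda>_. w" "\<lambda>_. 1"] by (simp add: add.commute)

lemma sum_dags_on_sources_superset: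
  assumes "finite T" "finite S" "S \<inter> T = {}"
  shows "(\<Sum>E\<in>{E \<in> dags_on (S \<union> T). S \<subseteq> sources_on (S \<union> T) E}. w ^ card E)
           = (1 + w) ^ (card S * card T) * dags_weight w T"
proof -
  let ?D = "dags_on T \<times> Pow (S \<times> T)"
  have inj: "inj_on (\<lambda>(E, F). E \<union> F) ?D"
  proof (rule inj_onI)
    have parts: "fst p = (\<lambda>(E, F). E \<union> F) p \<inter> (T \<times> T) \<and> snd p = (\<lambda>(E, F). E \<union> F) p \<inter> (S \<times> T)"
      if "p \<in> ?D" for p
      using that assms(3) unfolding dags_on_def by auto
    show "p = q" if "p \<in> ?D" "q \<in> ?D" "(\<lambda>(E, F). E \<union> F) p = (\<lambda>(E, F). E \<union> F) q" for p q
      using that parts[of p] parts[of q] by (simp add: prod_eq_iff)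
  qed
  have card_Un: "card (E \<union> F) = card E + card F" if "(E, F) \<in> ?D" for E F
  proof (rule card_Un_disjoint)
    show "finite E" "finite F" using that assms(1,2) finite_dags_on_member
      by (auto intro: finite_subset[of F "S \<times> T"])
    show "E \<inter> F = {}" using that assms(3) unfolding dags_on_def by auto
  qed
  have "(\<Sum>E\<in>{E \<in> dags_on (S \<union> T). S \<subseteq> sources_on (S \<union> T) E}. w ^ card E)
        = (\<Sum>(E, F)\<in>?D. w ^ card E * w ^ card F)"
    unfolding dags_on_sources_superset_eq_image[OF assms(3)] sum.reindex[OF inj]
    by (intro sum.cong) (auto simp: card_Un power_add)
  also have "\<dots> = dags_weight w T * (\<Sum>F\<in>Pow (S \<times> T). w ^ card F)"
    unfolding dags_weight_def sum_product sum.cartesian_product ..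
  also have "\<dots> = (1 + w) ^ (card S * card T) * dags_weight w T"
    using assms by (simp add: sum_power_card_Pow card_cartesian_product)
  finally show ?thesis .
qed

lemma sum_dags_on_weight_sources:
  assumes "finite V"
  shows "(\<Sum>E\<in>dags_on V. w ^ card E * u ^ card (sources_on V E))
           = (\<Sum>S\<in>Pow V. (u - 1) ^ card S
                * ((1 + w) ^ (card S * (card V - card S)) * dags_weight w {1..card V - card S}))"
proof -
  have "(\<Sum>E\<in>dags_on V. w ^ card E * u ^ card (sources_on V E))
        = (\<Sum>E\<in>dags_on V. \<Sum>S\<in>{S \<in> Pow V. S \<subseteq> sources_on V E}. (u - 1) ^ card S * w ^ card E)"
  proof (rule sum.cong)
    fix E
    have "Pow (sources_on V E) = {S \<in> Pow V. S \<subseteq> sources_on V E}"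
      unfolding sources_on_def by auto
    moreover have "u ^ card (sources_on V E) = (\<Sum>S\<in>Pow (sources_on V E). (u - 1) ^ card S)"
      using sum_power_card_Pow[of "sources_on V E" "u - 1"] assms unfolding sources_on_def by simp
    ultimately show "w ^ card E * u ^ card (sources_on V E)
        = (\<Sum>S\<in>{S \<in> Pow V. S \<subseteq> sources_on V E}. (u - 1) ^ card S * w ^ card E)"
      by (simp add: sum_distrib_left mult.commute)
  qed simp
  also have "\<dots> = (\<Sum>S\<in>Pow V. (u - 1) ^ card S * (\<Sum>E\<in>{E \<in> dags_on V. S \<subseteq> sources_on V E}. w ^ card E))"
    unfolding sum_distrib_left using assms finite_dags_on by (intro sum.swap_restrict) auto
  also have "\<dots> = (\<Sum>S\<in>Pow V. (u - 1) ^ card S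
                * ((1 + w) ^ (card S * (card V - card S)) * dags_weight w {1..card V - card S}))"
  proof (rule sum.cong)
    fix S assume "S \<in> Pow V"
    then have V: "V = S \<union> (V - S)" and fin: "finite S" "finite (V - S)"
      and card: "card (V - S) = card V - card S"
      using assms by (auto intro: finite_subset card_Diff_subset)
    have "(\<Sum>E\<in>{E \<in> dags_on V. S \<subseteq> sources_on V E}. w ^ card E)
          = (1 + w) ^ (card S * card (V - S)) * dags_weight w (V - S)"
      using sum_dags_on_sources_superset[OF fin(2,1), of w] V by auto
    then show "(u - 1) ^ card S * (\<Sum>E\<in>{E \<in> dags_on V. S \<subseteq> sources_on V E}. w ^ card E)
        = (u - 1) ^ card S * ((1 + w) ^ (card S * (card V - card S)) * dags_weight w {1..card V - card S})"
      using dags_weight_eq_atLeastAtMost[OF fin(2), of w] card by simp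
  qed simp
  finally show ?thesis .
qed

lemma sum_Pow_card_eq_sum_binomial:
  assumes "finite V"
  shows "(\<Sum>S\<in>Pow V. f (card S)) = (\<Sum>k\<le>card V. of_nat (card V choose k) * f k)"
proof -
  have "(\<Sum>S\<in>Pow V. f (card S)) = (\<Sum>k\<le>card V. \<Sum>S\<in>{S \<in> Pow V. card S = k}. f (card S))"
    using assms by (intro sum.group[symmetric]) (auto intro: card_mono)
  also have "\<dots> = (\<Sum>k\<le>card V. of_nat (card V choose k) * f k)"
    using n_subsets[OF assms] by (intro sum.cong) simp_all
  finally show ?thesis .
qed

lemma sum_dags_weight_sources:
  "(\<Sum>E\<in>dags n. w ^ card E * u ^ card (sources n E))
     = (\<Sum>k\<le>n. of_nat (n choose k) * ((u - 1) ^ k * ((1 + w) ^ (k * (n - k)) * dags_weight w {1..n - k})))"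
  using sum_dags_on_weight_sources[of "{1..n}" w u]
    sum_Pow_card_eq_sum_binomial[of "{1..n}" "\<lambda>k. (u - 1) ^ k * ((1 + w) ^ (k * (n - k)) * dags_weight w {1..n - k})"]
  by (simp add: dags_eq_dags_on sources_eq_sources_on)

lemma choose_two_add: "(k + m) choose 2 = (k choose 2) + (m choose 2) + k * m"
  by (induction m) (simp_all add: numeral_2_eq_2)

text \<open>\<open>Set_fps w a\<close> is the series \<open>Set(a z, w)\<close> of the paper.\<close>

definition Set_fps :: "real \<Rightarrow> real \<Rightarrow> real fps" where
  "Set_fps w a = Abs_fps (\<lambda>k. a ^ k / ((1 + w) ^ (k choose 2) * fact k))"

lemma fps_nth_DAG: "fps_nth (DAG w u) n = dag_coeff n w u"
  unfolding DAG_def by simp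

lemma dag_coeff_at_1: "dag_coeff n w 1 = dags_weight w {1..n} / ((1 + w) ^ (n choose 2) * fact n)"
  unfolding dag_coeff_def dags_weight_def dags_eq_dags_on by simp

lemma dag_coeff_eq_convolution:
  assumes "1 + w \<noteq> 0"
  shows "dag_coeff n w u = (\<Sum>k\<le>n. fps_nth (Set_fps w (u - 1)) k * dag_coeff (n - k) w 1)"
proof -
  have "dag_coeff n w u = (\<Sum>k\<le>n. of_nat (n choose k) * ((u - 1) ^ k * ((1 + w) ^ (k * (n - k))
          * dags_weight w {1..n - k})) / ((1 + w) ^ (n choose 2) * fact n))"
    unfolding dag_coeff_def sum_dags_weight_sources by (rule sum_divide_distrib)
  also have "\<dots> = (\<Sum>k\<le>n. fps_nth (Set_fps w (u - 1)) k * dag_coeff (n - k) w 1)"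
  proof (rule sum.cong)
    fix k assume "k \<in> {..n}"
    then obtain m where n: "n = k + m" by (auto simp: le_iff_add)
    then have m: "n - k = m" by simp
    have binom: "real (n choose k) = fact n / (fact k * fact m)"
      using binomial_fact[of k n] n by simp
    have pow: "(1 + w) ^ (n choose 2) = (1 + w) ^ (k choose 2) * (1 + w) ^ (m choose 2) * (1 + w) ^ (k * m)"
      unfolding n choose_two_add by (simp add: power_add)
    show "of_nat (n choose k) * ((u - 1) ^ k * ((1 + w) ^ (k * (n - k)) * dags_weight w {1..n - k}))
          / ((1 + w) ^ (n choose 2) * fact n) = fps_nth (Set_fps w (u - 1)) k * dag_coeff (n - k) w 1"
      using assms unfolding dag_coeff_at_1 Set_fps_def m binom pow by (simp add: field_simps)
  qed simp
  finally show ?thesis .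
qed

lemma DAG_eq_Set_fps_mult:
  assumes "1 + w \<noteq> 0"
  shows "DAG w u = Set_fps w (u - 1) * DAG w 1"
proof (rule fps_ext)
  fix n
  show "fps_nth (DAG w u) n = fps_nth (Set_fps w (u - 1) * DAG w 1) n"
    unfolding fps_nth_DAG dag_coeff_eq_convolution[OF assms, of n u] fps_mult_nth atMost_atLeast0 ..
qed

lemma sources_on_nonempty:
  assumes "E \<in> dags_on V" "finite V" "V \<noteq> {}"
  shows "sources_on V E \<noteq> {}"
proof -
  have "wf E"
    using finite_dags_on_member[OF assms(2,1)] assms(1) unfolding dags_on_def
    by (auto intro: finite_acyclic_wf)
  then obtain v where "v \<in> V" "\<And>x. (x, v) \<in> E \<Longrightarrow> x \<notin> V"
    using assms(3) wfE_min by (metis ex_in_conv)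
  with assms(1) have "v \<in> sources_on V E" unfolding dags_on_def sources_on_def by blast
  then show ?thesis by blast
qed

lemma DAG_at_0: "DAG w 0 = 1"
proof (rule fps_ext)
  fix n
  show "fps_nth (DAG w 0) n = fps_nth 1 n"
  proof (cases "n = 0")
    case True
    have "dags 0 = {{}}" unfolding dags_def acyclic_def by auto
    with True show ?thesis by (simp add: fps_nth_DAG dag_coeff_def sources_def numeral_2_eq_2)
  next
    case False
    then have "card (sources n E) \<noteq> 0" if "E \<in> dags n" for E
      using that sources_on_nonempty[of E "{1..n}"]
      by (simp add: dags_eq_dags_on sources_eq_sources_on sources_on_def)
    with False show ?thesis by (simp add: fps_nth_DAG dag_coeff_def zero_power)
  qed
qed

lemma Set_fps_minus_one_mult_DAG_at_1:
  assumes "1 + w \<noteq> 0"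
  shows "Set_fps w (-1) * DAG w 1 = 1"
  using DAG_eq_Set_fps_mult[OF assms, of 0] by (simp add: DAG_at_0)

lemma Set_fps_compose_scale: "Set_fps w a oo (fps_const c * fps_X) = Set_fps w (c * a)"
  unfolding fps_compose_linear Set_fps_def fps_eq_iff by (simp add: power_mult_distrib)

lemma has_field_derivative_fps_nth_mult:
  fixes G F' :: "'a :: real_normed_field fps"
  assumes "\<And>k. ((\<lambda>v. fps_nth (F v) k) has_field_derivative fps_nth F' k) (at u)"
  shows "((\<lambda>v. fps_nth (F v * G) n) has_field_derivative fps_nth (F' * G) n) (at u)"
  unfolding fps_mult_nth by (auto intro!: derivative_eq_intros assms)

lemma has_real_derivative_fps_nth_Set_fps:
  assumes "1 + w \<noteq> 0"
  shows "((\<lambda>a. fps_nth (Set_fps w a) k) has_real_derivative fps_nth (fps_X * Set_fps w (a / (1 + w))) k) (at a)"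
proof (cases k)
  case 0
  then show ?thesis by (simp add: Set_fps_def)
next
  case (Suc j)
  define d where "d = (1 + w) ^ (Suc j choose 2) * fact (Suc j)"
  have "Suc j choose 2 = (j choose 2) + j" by (simp add: numeral_2_eq_2)
  then have "(a / (1 + w)) ^ j / ((1 + w) ^ (j choose 2) * fact j) = real (Suc j) * a ^ (Suc j - Suc 0) / d"
    using assms unfolding d_def by (simp add: power_add power_divide field_simps del: of_nat_Suc)
  then have deriv: "fps_nth (fps_X * Set_fps w (a / (1 + w))) k = real (Suc j) * a ^ (Suc j - Suc 0) / d"
    unfolding Suc Set_fps_def by simp
  have coeff: "(\<lambda>a. fps_nth (Set_fps w a) k) = (\<lambda>a. a ^ Suc j / d)"
    unfolding Suc Set_fps_def d_def by simp
  show ?thesis unfolding deriv coeff by (rule DERIV_cdivide[OF DERIV_pow])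
qed

lemma u_du_DAG_eq:
  assumes "1 + w \<noteq> 0"
  shows "u_du_DAG w u = fps_const u * fps_X * Set_fps w ((u - 1) / (1 + w)) * DAG w 1"
proof (rule fps_ext)
  fix n
  have coeff: "dag_coeff n w v = fps_nth (Set_fps w (v - 1) * DAG w 1) n" for v
    by (metis DAG_eq_Set_fps_mult[OF assms] fps_nth_DAG)
  have "((\<lambda>v. fps_nth (Set_fps w (v - 1)) k) has_real_derivative
          fps_nth (fps_X * Set_fps w ((u - 1) / (1 + w))) k) (at u)" for k
    using DERIV_chain2[OF has_real_derivative_fps_nth_Set_fps[OF assms] DERIV_diff[OF DERIV_ident DERIV_const]]
    by simp
  then have "((\<lambda>v. dag_coeff n w v) has_real_derivative
               fps_nth (fps_X * Set_fps w ((u - 1) / (1 + w)) * DAG w 1) n) (at u)"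
    unfolding coeff by (rule has_field_derivative_fps_nth_mult)
  then show "fps_nth (u_du_DAG w u) n = fps_nth (fps_const u * fps_X * Set_fps w ((u - 1) / (1 + w)) * DAG w 1) n"
    unfolding u_du_DAG_def by (simp add: DERIV_imp_deriv mult.assoc)
qed

theorem theorem2:
  fixes w u :: real
  assumes "w > 0"
  shows "u_du_DAG w u =
           fps_const u * fps_X
           * (DAG w u oo (fps_const (1 / (1 + w)) * fps_X))
           * DAG w (w / (1 + w))"
proof -
  define cX where "cX = fps_const (1 / (1 + w)) * fps_X"
  have w: "1 + w \<noteq> 0" using assms by simp
  have cX: "fps_nth cX 0 = 0" unfolding cX_def by simp
  have scale: "Set_fps w a oo cX = Set_fps w (a / (1 + w))" for a
    unfolding cX_def Set_fps_compose_scale by simp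
  have "DAG w u oo cX = Set_fps w ((u - 1) / (1 + w)) * (DAG w 1 oo cX)"
    unfolding DAG_eq_Set_fps_mult[OF w, of u] fps_compose_mult_distrib[OF cX] scale ..
  moreover have "DAG w (w / (1 + w)) = Set_fps w (- 1 / (1 + w)) * DAG w 1"
    using DAG_eq_Set_fps_mult[OF w, of "w / (1 + w)"] w by (simp add: field_simps)
  moreover have "Set_fps w (- 1 / (1 + w)) * (DAG w 1 oo cX) = 1"
    using arg_cong[OF Set_fps_minus_one_mult_DAG_at_1[OF w], of "\<lambda>F. F oo cX"]
    unfolding fps_compose_mult_distrib[OF cX] scale by simp
  ultimately have "fps_const u * fps_X * (DAG w u oo cX) * DAG w (w / (1 + w))
                     = fps_const u * fps_X * Set_fps w ((u - 1) / (1 + w)) * DAG w 1"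
    by (simp add: ac_simps)
  then show ?thesis
    unfolding u_du_DAG_eq[OF w] cX_def by (rule sym)
qed

end
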